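(* Let $\mathcal{L}_1$ be the set of lines of $\mathrm{PG}(3,q)$ that are the intersection of two distinct osculating planes of $\mathcal{C}$. Then every line of $\mathcal{L}_1$ is disjoint from $\mathcal{C}$, $\mathcal{L}_1$ is a single $G$-orbit, and every $\ell\in\mathcal{L}_1$ satisfies: if $q\equiv 5 \pmod 6$, then $OD_2(\ell)=[2,0,0,q-1,0]$ and $OD_0(\ell)=[0,2,q-1,0,0]$; if $q\equiv 1 \pmod 6$, then $OD_2(\ell)=[2,0,\tfrac{q-1}{3},0,\tfrac{2(q-1)}{3}]$ and $OD_0(\ell)=[0,2,q-1,0,0]$.
   Context: Let $q$ be a power of a prime $p$, with $p\neq 2$ and $p\neq 3$, and $\mathbb{F}_q$ the field of order $q$. In $\mathrm{PG}(3,q)$ with homogeneous coordinates $(Y_0,Y_1,Y_2,Y_3)$, the twisted cubic is $\mathcal{C}=\{P(t):t\in\mathbb{F}_q\}\cup\{P(\infty)\}$, where $P(t)=(1,t,t^2,t^3)$ and $P(\infty)=(0,0,0,1)$. $G\le \mathrm{PGL}(4,q)$ is the image of the homomorphism $\mathrm{PGL}(2,q)\to\mathrm{PGL}(4,q)$ sending the projectivity with matrix $\begin{pmatrix}a&b\\c&d\end{pmatrix}$ to the projectivity with matrix $\begin{pmatrix} a^3&a^2b&ab^2&b^3\\ 3a^2c&a^2d+2abc&b^2c+2abd&3b^2d\\ 3ac^2&bc^2+2acd&ad^2+2bcd&3bd^2\\ c^3&c^2d&cd^2&d^3\end{pmatrix}$; $G\cong\mathrm{PGL}(2,q)$ stabilises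 $\mathcal{C}$. The osculating plane at $P(t)$ is $\Pi(t):\,-t^3Y_0+3t^2Y_1-3tY_2+Y_3=0$ for $t\in\mathbb{F}_q$, and $\Pi(\infty): Y_0=0$; there are $q+1$ osculating planes. The tangent line at $P(t)$ is the unique line through $P(t)$ meeting $\mathcal{C}$ with multiplicity two (e.g. the tangent at $P(0)$ is $Y_2=Y_3=0$, at $P(\infty)$ is $Y_0=Y_1=0$). Point classes ($G$-orbits on points): $\mathcal{P}_1$ = points of $\mathcal{C}$; $\mathcal{P}_2$ = points not on $\mathcal{C}$ lying on a tangent line of $\mathcal{C}$; $\mathcal{P}_3$ = points not on $\mathcal{C}$ lying on exactly three osculating planes; $\mathcal{P}_4$ = points not on $\mathcal{C}$ lying on exactly one osculating plane; $\mathcal{P}_5$ = points on no osculating plane. Plane classes ($G$-orbits on planes): $\mathcal{H}_1$ = osculating planes; $\mathcal{H}_2$ = planes meeting $\mathcal{C}$ in exactly two points; $\mathcal{H}_3$ = planes meeting $\mathcal{C}$ in exactly three points; $\mathcal{H}_4$ = non-osculating planes meeting $\mathcal{C}$ in exactly one point; $\mathcal{H}_5$ = planes disjoint from $\mathcal{C}$. For a line $\ell$, the point orbit distribution is $OD_0(\ell)=[a_0,b_0,c_0,d_0,e_0]$ where these are the numbers of points of $\ell$ in $\mathcal{P}_1,\dots,\mathcal{P}_5$ respectively; the plane orbit distribution is $OD_2(\ell)=[a_2,\dots,e_2]$, the numbers of planes through $\ell$ in $\mathcal{H}_1,\dots,\mathcal{H}_5$ respectively. *)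

theory Defs
  imports Main
begin

text \<open>Homogeneous coordinates (Y0,Y1,Y2,Y3) of PG(3,q) over a finite field 'a.
  A point is the set of all nonzero scalar multiples of a nonzero vector; a plane is
  the set of points annihilated by a nonzero dual vector; a line is the intersection
  of two distinct planes.\<close>

type_synonym 'a v4 = "'a \<times> 'a \<times> 'a \<times> 'a"

definition zero4 :: "'a::field v4" where
  "zero4 = (0,0,0,0)"

definition sc :: "'a::field \<Rightarrow> 'a v4 \<Rightarrow> 'a v4" where
  "sc c v = (case v of (x0,x1,x2,x3) \<Rightarrow> (c*x0, c*x1, c*x2, c*x3))"

definition vadd :: "'a::field v4 \<Rightarrow> 'a v4 \<Rightarrow> 'a v4" where
  "vadd v w = (case v of (x0,x1,x2,x3) \<Rightarrow> case w of (y0,y1,y2,y3) \<Rightarrow>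
      (x0+y0, x1+y1, x2+y2, x3+y3))"

definition dot4 :: "'a::field v4 \<Rightarrow> 'a v4 \<Rightarrow> 'a" where
  "dot4 u v = (case u of (u0,u1,u2,u3) \<Rightarrow> case v of (x0,x1,x2,x3) \<Rightarrow>
      u0*x0 + u1*x1 + u2*x2 + u3*x3)"

definition pt :: "'a::field v4 \<Rightarrow> 'a v4 set" where
  "pt v = {sc c v | c. c \<noteq> 0}"

definition points :: "'a::field v4 set set" where
  "points = {pt v | v. v \<noteq> zero4}"

definition plane :: "'a::field v4 \<Rightarrow> 'a v4 set set" where
  "plane u = {P \<in> points. \<forall>v\<in>P. dot4 u v = 0}"

definition planes :: "'a::field v4 set set set" where
  "planes = {plane u | u. u \<noteq> zero4}"

definition lines :: "'a::field v4 set set set" where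
  "lines = {H \<inter> K | H K. H \<in> planes \<and> K \<in> planes \<and> H \<noteq> K}"

definition join :: "'a::field v4 \<Rightarrow> 'a v4 \<Rightarrow> 'a v4 set set" where
  "join v w = {pt (vadd (sc a v) (sc b w)) | a b. (a, b) \<noteq> (0, 0)}"

definition Pc :: "'a::field \<Rightarrow> 'a v4 set" where
  "Pc t = pt (1, t, t^2, t^3)"

definition Pinf :: "'a::field v4 set" where
  "Pinf = pt (0, 0, 0, 1)"

definition curve :: "'a::field v4 set set" where
  "curve = range Pc \<union> {Pinf}"

definition osc :: "'a::field \<Rightarrow> 'a v4 set set" where
  "osc t = plane (- (t^3), 3 * t^2, - (3 * t), 1)"

definition osc_inf :: "'a::field v4 set set" where
  "osc_inf = plane (1, 0, 0, 0)"

definition osc_planes :: "'a::field v4 set set set" where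
  "osc_planes = range osc \<union> {osc_inf}"

text \<open>Tangent lines: the line through P(t) and the derivative point (0,1,2t,3t^2);
  at infinity the line Y0 = Y1 = 0.\<close>
definition tangent :: "'a::field \<Rightarrow> 'a v4 set set" where
  "tangent t = join (1, t, t^2, t^3) (0, 1, 2 * t, 3 * t^2)"

definition tangent_inf :: "'a::field v4 set set" where
  "tangent_inf = join (0, 0, 0, 1) (0, 0, 1, 0)"

definition tangents :: "'a::field v4 set set set" where
  "tangents = range tangent \<union> {tangent_inf}"

definition n_osc :: "'a::field v4 set \<Rightarrow> nat" where
  "n_osc P = card {H \<in> osc_planes. P \<in> H}"

definition PC1 :: "'a::field v4 set set" where "PC1 = curve"
definition PC2 :: "'a::field v4 set set" where
  "PC2 = {P \<in> points. P \<notin> curve \<and> (\<exists>L\<in>tangents. P \<in> L)}"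
definition PC3 :: "'a::field v4 set set" where
  "PC3 = {P \<in> points. P \<notin> curve \<and> n_osc P = 3}"
definition PC4 :: "'a::field v4 set set" where
  "PC4 = {P \<in> points. P \<notin> curve \<and> n_osc P = 1}"
definition PC5 :: "'a::field v4 set set" where
  "PC5 = {P \<in> points. n_osc P = 0}"

definition HC1 :: "'a::field v4 set set set" where "HC1 = osc_planes"
definition HC2 :: "'a::field v4 set set set" where
  "HC2 = {H \<in> planes. card (H \<inter> curve) = 2}"
definition HC3 :: "'a::field v4 set set set" where
  "HC3 = {H \<in> planes. card (H \<inter> curve) = 3}"
definition HC4 :: "'a::field v4 set set set" where
  "HC4 = {H \<in> planes. H \<notin> osc_planes \<and> card (H \<inter> curve) = 1}"
definition HC5 :: "'a::field v4 set set set" where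
  "HC5 = {H \<in> planes. H \<inter> curve = {}}"

definition OD0 :: "'a::field v4 set set \<Rightarrow> nat list" where
  "OD0 l = map (\<lambda>C. card (l \<inter> C)) [PC1, PC2, PC3, PC4, PC5]"

definition OD2 :: "'a::field v4 set set \<Rightarrow> nat list" where
  "OD2 l = map (\<lambda>C. card {H \<in> C. l \<subseteq> H}) [HC1, HC2, HC3, HC4, HC5]"

text \<open>The group G: the 4x4 matrix M(a,b,c,d) acting on row vectors, Y \<mapsto> Y M
  (this is the action which maps P(t) to P((b+dt)/(a+ct))).\<close>
definition gmap :: "'a::field \<Rightarrow> 'a \<Rightarrow> 'a \<Rightarrow> 'a \<Rightarrow> 'a v4 \<Rightarrow> 'a v4" where
  "gmap a b c d y = (case y of (y0,y1,y2,y3) \<Rightarrow>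
     ( y0 * a^3 + y1 * (3*a^2*c) + y2 * (3*a*c^2) + y3 * c^3,
       y0 * (a^2*b) + y1 * (a^2*d + 2*a*b*c) + y2 * (b*c^2 + 2*a*c*d) + y3 * (c^2*d),
       y0 * (a*b^2) + y1 * (b^2*c + 2*a*b*d) + y2 * (a*d^2 + 2*b*c*d) + y3 * (c*d^2),
       y0 * b^3 + y1 * (3*b^2*d) + y2 * (3*b*d^2) + y3 * d^3))"

definition Gmaps :: "('a::field v4 \<Rightarrow> 'a v4) set" where
  "Gmaps = {gmap a b c d | a b c d. a * d - b * c \<noteq> 0}"

definition line_act :: "('a::field v4 \<Rightarrow> 'a v4) \<Rightarrow> 'a v4 set set \<Rightarrow> 'a v4 set set" where
  "line_act g l = (\<lambda>P. g ` P) ` l"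

definition L1 :: "'a::field v4 set set set" where
  "L1 = {l \<in> lines. \<exists>H K. H \<in> osc_planes \<and> K \<in> osc_planes \<and> H \<noteq> K \<and> l = H \<inter> K}"

end

theory Submission
  imports Defs "HOL-Computational_Algebra.Polynomial"
begin

(* In homogeneous parameters (s0 : s1) the curve is (s0^3, s0^2 s1, s0 s1^2, s1^3), and G acts on
   the curve, on its osculating planes and on its tangent lines by the linear substitution of
   (s0 : s1) given by the 2x2 matrix. As PGL(2,q) is 2-transitive on the projective line, L1 is the
   orbit of the axis Y0 = Y3 = 0, the intersection of the osculating planes at infinity and at 0,
   and as the point and plane classes are G-orbits it suffices to count on this axis. Its points
   (0,1,y,0) lie on the osculating planes at infinity, 0 and y; only (0,1,0,0) and (0,0,1,0) lie on
   tangents. The planes through it are the osculating plane at infinity and the planes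
   a Y0 + Y3 = 0, which meet the curve in the points P(t) with t^3 = -a. Finally, t -> t^3 permutes
   the nonzero elements of F_q if 3 does not divide q - 1, and is three-to-one onto a third of them
   otherwise. *)

lemma sc_tuple: "sc c (x0, x1, x2, x3) = (c * x0, c * x1, c * x2, c * x3)"
  by (simp add: sc_def)

lemma vadd_tuple: "vadd (x0, x1, x2, x3) (y0, y1, y2, y3) = (x0 + y0, x1 + y1, x2 + y2, x3 + y3)"
  by (simp add: vadd_def)

lemma dot4_tuple: "dot4 (u0, u1, u2, u3) (x0, x1, x2, x3) = u0 * x0 + u1 * x1 + u2 * x2 + u3 * x3"
  by (simp add: dot4_def)

lemma zero4_tuple: "zero4 = (0, 0, 0, 0)"
  by (simp add: zero4_def)

lemmas v4_simps = sc_tuple vadd_tuple dot4_tuple zero4_tuple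

lemma tuple_eq_zero4_iff: "(x0, x1, x2, x3) = zero4 \<longleftrightarrow> x0 = 0 \<and> x1 = 0 \<and> x2 = 0 \<and> x3 = 0"
  by (simp add: zero4_tuple)

lemma sc_sc: "sc a (sc b v) = sc (a * b) (v :: 'a::field v4)"
  by (cases v rule: prod_cases4) (simp add: v4_simps mult.assoc)

lemma sc_1 [simp]: "sc 1 (v :: 'a::field v4) = v"
  by (cases v rule: prod_cases4) (simp add: v4_simps)

lemma sc_0 [simp]: "sc 0 (v :: 'a::field v4) = zero4"
  by (cases v rule: prod_cases4) (simp add: v4_simps)

lemma vadd_zero4 [simp]: "vadd v zero4 = v" "vadd zero4 v = (v :: 'a::field v4)"
  by (cases v rule: prod_cases4; simp add: v4_simps)+

lemma sc_eq_zero4_iff: "sc c (v :: 'a::field v4) = zero4 \<longleftrightarrow> c = 0 \<or> v = zero4"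
  by (cases v rule: prod_cases4) (auto simp add: v4_simps)

lemma dot4_sc_left: "dot4 (sc c u) v = c * dot4 u (v :: 'a::field v4)"
  by (cases u rule: prod_cases4; cases v rule: prod_cases4) (simp add: v4_simps algebra_simps)

lemma dot4_sc_right: "dot4 u (sc c v) = c * dot4 u (v :: 'a::field v4)"
  by (cases u rule: prod_cases4; cases v rule: prod_cases4) (simp add: v4_simps algebra_simps)

lemma dot4_vadd_right: "dot4 u (vadd v w) = dot4 u v + dot4 u (w :: 'a::field v4)"
  by (cases u rule: prod_cases4; cases v rule: prod_cases4; cases w rule: prod_cases4)
    (simp add: v4_simps algebra_simps)

lemma dot4_zero4_left [simp]: "dot4 zero4 v = (0 :: 'a::field)"
  by (cases v rule: prod_cases4) (simp add: v4_simps)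

lemma lin_comb_lin_comb:
  "vadd (sc a (vadd (sc p x) (sc r y))) (sc b (vadd (sc s x) (sc u y)))
     = vadd (sc (a * p + b * s) x) (sc (a * r + b * u) (y :: 'a::field v4))"
  by (cases x rule: prod_cases4; cases y rule: prod_cases4) (simp add: v4_simps algebra_simps)

lemma in_pt_self: "v \<in> pt v"
  unfolding pt_def by (rule CollectI, rule exI[of _ 1]) simp

lemma in_ptE: "w \<in> pt v \<Longrightarrow> (\<And>c. c \<noteq> 0 \<Longrightarrow> w = sc c v \<Longrightarrow> thesis) \<Longrightarrow> thesis"
  unfolding pt_def by blast

lemma pt_sc:
  assumes c: "c \<noteq> 0" shows "pt (sc c v) = pt (v :: 'a::field v4)"
  unfolding pt_def
proof (intro equalityI subsetI; elim CollectE exE conjE)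
  fix w d assume "w = sc d (sc c v)" "d \<noteq> 0"
  then show "w \<in> {sc d v |d. d \<noteq> 0}" using c by (auto simp: sc_sc)
next
  fix w d assume "w = sc d v" "d \<noteq> 0"
  then show "w \<in> {sc d (sc c v) |d. d \<noteq> 0}" using c by (auto simp: sc_sc intro!: exI[of _ "d / c"])
qed

lemma pt_eq_iff: "pt v = pt w \<longleftrightarrow> (\<exists>c. c \<noteq> 0 \<and> w = sc c (v :: 'a::field v4))"
  by (metis in_pt_self in_ptE pt_sc)

lemma pt_tuple_eq_iff:
  "pt (x0, x1, x2, x3) = pt (y0, y1, y2, y3) \<longleftrightarrow>
    (\<exists>c. c \<noteq> 0 \<and> y0 = c * x0 \<and> y1 = c * x1 \<and> y2 = c * x2 \<and> y3 = c * (x3 :: 'a::field))"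
  unfolding pt_eq_iff by (simp add: sc_tuple)

lemma pt_in_points: "v \<noteq> zero4 \<Longrightarrow> pt v \<in> points"
  unfolding points_def by blast

lemma pointsE: "P \<in> points \<Longrightarrow> (\<And>v. v \<noteq> zero4 \<Longrightarrow> P = pt v \<Longrightarrow> thesis) \<Longrightarrow> thesis"
  unfolding points_def by blast

lemma pt_in_plane_iff: "v \<noteq> zero4 \<Longrightarrow> pt v \<in> plane u \<longleftrightarrow> dot4 u v = 0"
  unfolding plane_def by (auto simp: pt_in_points in_pt_self dot4_sc_right elim!: in_ptE)

lemma pt_tuple_in_plane_iff:
  "(x0, x1, x2, x3) \<noteq> zero4 \<Longrightarrow>
     pt (x0, x1, x2, x3) \<in> plane (u0, u1, u2, u3) \<longleftrightarrow> u0 * x0 + u1 * x1 + u2 * x2 + u3 * (x3 :: 'a::field) = 0"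
  by (simp add: pt_in_plane_iff dot4_tuple)

lemma plane_subset_points: "plane u \<subseteq> points"
  unfolding plane_def by auto

lemma plane_sc: "c \<noteq> 0 \<Longrightarrow> plane (sc c u) = plane (u :: 'a::field v4)"
  unfolding plane_def by (auto simp: dot4_sc_left)

lemma planes_subset_Pow_points: "planes \<subseteq> Pow points"
  unfolding planes_def using plane_subset_points by blast

lemma join_lin_comb_subset:
  fixes p r s u :: "'a::field"
  assumes det: "p * u - r * s \<noteq> 0"
  shows "join (vadd (sc p x) (sc r y)) (vadd (sc s x) (sc u y)) \<subseteq> join x y"
proof
  fix P assume "P \<in> join (vadd (sc p x) (sc r y)) (vadd (sc s x) (sc u y))"
  then obtain a b where ab: "(a, b) \<noteq> (0, 0)"
    and P: "P = pt (vadd (sc (a * p + b * s) x) (sc (a * r + b * u) y))"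
    unfolding join_def lin_comb_lin_comb by blast
  have "(a * p + b * s, a * r + b * u) \<noteq> (0, 0)"
  proof
    assume "(a * p + b * s, a * r + b * u) = (0, 0)"
    moreover have "a * (p * u - r * s) = u * (a * p + b * s) - s * (a * r + b * u)"
      and "b * (p * u - r * s) = p * (a * r + b * u) - r * (a * p + b * s)"
      by (simp_all add: algebra_simps)
    ultimately show False using det ab by simp
  qed
  then show "P \<in> join x y" unfolding join_def P by blast
qed

lemma join_lin_comb:
  fixes p r s u :: "'a::field"
  assumes det: "p * u - r * s \<noteq> 0"
  shows "join (vadd (sc p x) (sc r y)) (vadd (sc s x) (sc u y)) = join x y"
proof
  define d where "d = p * u - r * s"
  define X where "X = vadd (sc p x) (sc r y)"
  define Y where "Y = vadd (sc s x) (sc u y)"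
  have d: "d \<noteq> 0" using det d_def by simp
  have coeffs: "(u / d) * p + (- r / d) * s = 1" "(u / d) * r + (- r / d) * u = 0"
    and "(- s / d) * p + (p / d) * s = 0" "(- s / d) * r + (p / d) * u = 1"
    using d by (simp_all add: divide_simps) (simp_all add: d_def algebra_simps)
  then have x: "x = vadd (sc (u / d) X) (sc (- r / d) Y)"
    and y: "y = vadd (sc (- s / d) X) (sc (p / d) Y)"
    unfolding X_def Y_def lin_comb_lin_comb by (simp_all only: coeffs sc_1 sc_0 vadd_zero4)
  have "(u / d) * (p / d) - (- r / d) * (- s / d) = (p * u - r * s) / (d * d)"
    using d by (simp add: field_simps)
  also have "\<dots> = 1 / d"
    using d by (simp add: d_def[symmetric])
  finally have "(u / d) * (p / d) - (- r / d) * (- s / d) \<noteq> 0" using d by simp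
  from join_lin_comb_subset[OF this, of X Y] show "join x y \<subseteq> join X Y"
    by (simp only: x[symmetric] y[symmetric])
qed (rule join_lin_comb_subset[OF det])

lemma join_sc: "c \<noteq> 0 \<Longrightarrow> join (sc c x) (sc c y) = join x (y :: 'a::field v4)"
  using join_lin_comb[of c c 0 0 x y] by simp

section \<open>Collineations\<close>

definition linear4 :: "('a::field v4 \<Rightarrow> 'a v4) \<Rightarrow> bool" where
  "linear4 g \<longleftrightarrow> (\<forall>c v. g (sc c v) = sc c (g v)) \<and> (\<forall>v w. g (vadd v w) = vadd (g v) (g w))"

definition dual4 :: "('a::field v4 \<Rightarrow> 'a v4) \<Rightarrow> 'a v4 \<Rightarrow> 'a v4" where
  "dual4 g u = (dot4 u (g (1, 0, 0, 0)), dot4 u (g (0, 1, 0, 0)), dot4 u (g (0, 0, 1, 0)),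
                dot4 u (g (0, 0, 0, 1)))"

lemma linear4_sc: "linear4 g \<Longrightarrow> g (sc c v) = sc c (g v)"
  unfolding linear4_def by blast

lemma linear4_vadd: "linear4 g \<Longrightarrow> g (vadd v w) = vadd (g v) (g w)"
  unfolding linear4_def by blast

lemma image_pt_linear4: "linear4 g \<Longrightarrow> g ` pt v = pt (g v)"
  unfolding pt_def by (force simp: linear4_sc)

lemma dot4_dual4:
  assumes "linear4 g" shows "dot4 (dual4 g u) v = dot4 u (g v)"
proof (cases v rule: prod_cases4)
  case (fields v0 v1 v2 v3)
  have "v = vadd (vadd (vadd (sc v0 (1, 0, 0, 0)) (sc v1 (0, 1, 0, 0))) (sc v2 (0, 0, 1, 0)))
              (sc v3 (0, 0, 0, 1))"
    using fields by (simp add: v4_simps)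
  then have "g v = vadd (vadd (vadd (sc v0 (g (1, 0, 0, 0))) (sc v1 (g (0, 1, 0, 0))))
                 (sc v2 (g (0, 0, 1, 0)))) (sc v3 (g (0, 0, 0, 1)))"
    using assms by (simp add: linear4_sc linear4_vadd)
  then show ?thesis
    using fields by (simp add: dual4_def dot4_vadd_right dot4_sc_right v4_simps algebra_simps)
qed

lemma line_act_join_linear4:
  assumes "linear4 g" shows "line_act g (join x y) = join (g x) (g y)"
proof -
  have "line_act g (join x y) = {g ` pt (vadd (sc a x) (sc b y)) | a b. (a, b) \<noteq> (0, 0)}"
    unfolding line_act_def join_def by blast
  then show ?thesis
    unfolding join_def image_pt_linear4[OF assms] linear4_vadd[OF assms] linear4_sc[OF assms] .
qed

locale inverse_pair =
  fixes g h :: "'a::field v4 \<Rightarrow> 'a v4" and k :: 'a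
  assumes linear_g: "linear4 g" and linear_h: "linear4 h" and k_nonzero: "k \<noteq> 0"
    and h_g: "\<And>v. h (g v) = sc k v" and g_h: "\<And>v. g (h v) = sc k v"
begin

lemma swap: "inverse_pair h g k"
  using linear_g linear_h k_nonzero h_g g_h by unfold_locales

lemma g_nonzero: "v \<noteq> zero4 \<Longrightarrow> g v \<noteq> zero4"
  by (metis h_g k_nonzero linear_h linear4_sc sc_0 sc_eq_zero4_iff)

lemma image_points: "P \<in> points \<Longrightarrow> g ` P \<in> points"
  by (auto elim!: pointsE simp: image_pt_linear4[OF linear_g] g_nonzero pt_in_points)

lemma inverse_image:
  assumes "P \<in> points" shows "h ` g ` P = P"
proof -
  obtain v where "P = pt v" using assms by (rule pointsE)
  then show ?thesis
    by (simp add: image_pt_linear4[OF linear_g] image_pt_linear4[OF linear_h] h_g pt_sc k_nonzero)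
qed

lemma inj_on_image: "inj_on ((`) g) points"
  by (metis inverse_image inj_onI)

lemma image_in_plane_iff: "P \<in> points \<Longrightarrow> g ` P \<in> plane u \<longleftrightarrow> P \<in> plane (dual4 g u)"
  by (auto elim!: pointsE simp: image_pt_linear4[OF linear_g] g_nonzero pt_in_plane_iff
      dot4_dual4[OF linear_g])

lemma dual4_nonzero:
  assumes "u \<noteq> zero4" shows "dual4 g u \<noteq> zero4"
proof
  assume "dual4 g u = zero4"
  then have "dot4 u (sc k w) = 0" for w
    using dot4_dual4[OF linear_g, of u "h w"] by (simp add: g_h)
  then have "dot4 u w = 0" for w
    using k_nonzero by (simp add: dot4_sc_right)
  from this[of "(1, 0, 0, 0)"] this[of "(0, 1, 0, 0)"] this[of "(0, 0, 1, 0)"] this[of "(0, 0, 0, 1)"]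
  show False using assms by (cases u rule: prod_cases4) (simp add: v4_simps)
qed

lemma line_act_inverse:
  assumes "S \<subseteq> points" shows "line_act h (line_act g S) = S"
proof -
  have "line_act h (line_act g S) = (\<lambda>P. h ` g ` P) ` S"
    unfolding line_act_def by (rule image_image)
  also have "\<dots> = S"
    using assms inverse_image by (simp add: subset_iff)
  finally show ?thesis .
qed

lemma line_act_plane: "line_act g (plane u) = plane (dual4 h u)"
proof (intro equalityI subsetI)
  fix Q assume "Q \<in> line_act g (plane u)"
  then obtain P where P: "P \<in> plane u" and Q: "Q = g ` P"
    unfolding line_act_def by blast
  then have "P \<in> points" using plane_subset_points by blast
  then show "Q \<in> plane (dual4 h u)"
    using P Q image_points inverse_image inverse_pair.image_in_plane_iff[OF swap] by metis
next
  fix Q assume Q: "Q \<in> plane (dual4 h u)"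
  then have "Q \<in> points" using plane_subset_points by blast
  then have "h ` Q \<in> plane u" and "Q = g ` h ` Q"
    using Q inverse_pair.image_in_plane_iff[OF swap] inverse_pair.inverse_image[OF swap] by auto
  then show "Q \<in> line_act g (plane u)"
    unfolding line_act_def by blast
qed

lemma line_act_planes: "H \<in> planes \<Longrightarrow> line_act g H \<in> planes"
  unfolding planes_def
  using line_act_plane inverse_pair.dual4_nonzero[OF swap] by blast

lemma inj_on_line_act: "inj_on (line_act g) (Pow points)"
  by (rule inj_onI) (metis PowD line_act_inverse)

lemma line_act_Int: "S \<subseteq> points \<Longrightarrow> T \<subseteq> points \<Longrightarrow> line_act g (S \<inter> T) = line_act g S \<inter> line_act g T"
  unfolding line_act_def by (rule inj_on_image_Int[OF inj_on_image])

lemma line_act_subset_iff: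
  assumes "S \<subseteq> points" "T \<subseteq> points"
  shows "line_act g S \<subseteq> line_act g T \<longleftrightarrow> S \<subseteq> T"
proof
  assume "line_act g S \<subseteq> line_act g T"
  then have "line_act h (line_act g S) \<subseteq> line_act h (line_act g T)"
    unfolding line_act_def by auto
  then show "S \<subseteq> T" using assms line_act_inverse by simp
qed (auto simp: line_act_def)

lemma line_act_Int_invariant:
  assumes C: "\<And>P. P \<in> points \<Longrightarrow> g ` P \<in> C \<longleftrightarrow> P \<in> C" and l: "l \<subseteq> points"
  shows "line_act g l \<inter> C = line_act g (l \<inter> C)"
  unfolding line_act_def using C l by auto

lemma card_line_act_Int_invariant:
  assumes "\<And>P. P \<in> points \<Longrightarrow> g ` P \<in> C \<longleftrightarrow> P \<in> C" and l: "l \<subseteq> points"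
  shows "card (line_act g l \<inter> C) = card (l \<inter> C)"
proof -
  have "inj_on ((`) g) (l \<inter> C)"
    using l by (blast intro: inj_on_subset[OF inj_on_image])
  then have "card (line_act g (l \<inter> C)) = card (l \<inter> C)"
    unfolding line_act_def by (rule card_image)
  then show ?thesis
    using line_act_Int_invariant[OF assms] by simp
qed

lemma card_planes_containing_line_act:
  assumes D: "D \<subseteq> planes" and inv: "\<And>H. H \<in> planes \<Longrightarrow> line_act g H \<in> D \<longleftrightarrow> H \<in> D"
    and l: "l \<subseteq> points"
  shows "card {H \<in> D. line_act g l \<subseteq> H} = card {H \<in> D. l \<subseteq> H}"
proof -
  have Dp: "D \<subseteq> Pow points" using D planes_subset_Pow_points by blast
  have "{H \<in> D. line_act g l \<subseteq> H} \<subseteq> line_act g ` {H \<in> D. l \<subseteq> H}"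
  proof
    fix H' assume H': "H' \<in> {H \<in> D. line_act g l \<subseteq> H}"
    define H where "H = line_act h H'"
    have "H' \<subseteq> points" "H' \<in> planes" using H' D Dp by auto
    then have H: "H \<in> planes" "line_act g H = H'"
      unfolding H_def
      using inverse_pair.line_act_planes[OF swap] inverse_pair.line_act_inverse[OF swap] by auto
    then have "H \<subseteq> points" using planes_subset_Pow_points by blast
    then have "l \<subseteq> H" using H H' line_act_subset_iff[OF l] by auto
    then show "H' \<in> line_act g ` {H \<in> D. l \<subseteq> H}" using H H' inv by force
  qed
  moreover have "line_act g ` {H \<in> D. l \<subseteq> H} \<subseteq> {H \<in> D. line_act g l \<subseteq> H}"
    using D inv unfolding line_act_def by auto
  moreover have "inj_on (line_act g) {H \<in> D. l \<subseteq> H}"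
    using Dp by (blast intro: inj_on_subset[OF inj_on_line_act])
  ultimately show ?thesis by (simp add: card_image subset_antisym)
qed

end

section \<open>The group G\<close>

lemma gmap_linear4: "linear4 (gmap a b c d)"
  unfolding linear4_def
  by (intro conjI allI; simp split: prod.split add: gmap_def v4_simps algebra_simps)

lemma gmap_adjugate: "gmap d (- b) (- c) a (gmap a b c d v) = sc ((a * d - b * c) ^ 3) v"
proof (cases v rule: prod_cases4)
  case (fields y0 y1 y2 y3)
  show ?thesis unfolding fields gmap_def sc_tuple by simp (intro conjI; algebra)
qed

lemma gmap_inverse_pair:
  assumes "a * d - b * c \<noteq> 0"
  shows "inverse_pair (gmap a b c d) (gmap d (- b) (- c) a) ((a * d - b * c) ^ 3)"
proof
  show "gmap a b c d (gmap d (- b) (- c) a v) = sc ((a * d - b * c) ^ 3) v" for v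
    using gmap_adjugate[where a = d and b = "- b" and c = "- c" and d = a] by (simp add: mult.commute)
qed (use assms gmap_linear4 gmap_adjugate in auto)

lemma GmapsE: "g \<in> Gmaps \<Longrightarrow> (\<And>a b c d. g = gmap a b c d \<Longrightarrow> a * d - b * c \<noteq> 0 \<Longrightarrow> thesis) \<Longrightarrow> thesis"
  unfolding Gmaps_def by blast

lemma Gmaps_inverse_pairE:
  assumes "g \<in> Gmaps"
  obtains h k where "inverse_pair g h k" "h \<in> Gmaps"
proof -
  obtain a b c d where g: "g = gmap a b c d" "a * d - b * c \<noteq> 0"
    using assms by (rule GmapsE)
  then have "gmap d (- b) (- c) a \<in> Gmaps"
    unfolding Gmaps_def by (force simp: mult.commute)
  with gmap_inverse_pair[OF g(2)] g(1) show ?thesis using that by blast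
qed

lemma Gmaps_image_points: "g \<in> Gmaps \<Longrightarrow> P \<in> points \<Longrightarrow> g ` P \<in> points"
  by (metis Gmaps_inverse_pairE inverse_pair.image_points)

lemma Gmaps_line_act_planes: "g \<in> Gmaps \<Longrightarrow> H \<in> planes \<Longrightarrow> line_act g H \<in> planes"
  by (metis Gmaps_inverse_pairE inverse_pair.line_act_planes)

lemma Gmaps_image_iff:
  assumes preserved: "\<And>g P. g \<in> Gmaps \<Longrightarrow> P \<in> points \<Longrightarrow> \<Phi> P \<Longrightarrow> \<Phi> (g ` P)"
    and g: "g \<in> Gmaps" and P: "P \<in> points"
  shows "\<Phi> (g ` P) \<longleftrightarrow> \<Phi> P"
proof
  assume "\<Phi> (g ` P)"
  obtain h k where "inverse_pair g h k" "h \<in> Gmaps" using g by (rule Gmaps_inverse_pairE)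
  then show "\<Phi> P"
    using preserved[of h "g ` P"] \<open>\<Phi> (g ` P)\<close> Gmaps_image_points[OF g P]
      inverse_pair.inverse_image[OF _ P] by metis
qed (rule preserved[OF g P])

lemma Gmaps_line_act_iff:
  assumes preserved: "\<And>g H. g \<in> Gmaps \<Longrightarrow> H \<in> planes \<Longrightarrow> \<Phi> H \<Longrightarrow> \<Phi> (line_act g H)"
    and g: "g \<in> Gmaps" and H: "H \<in> planes"
  shows "\<Phi> (line_act g H) \<longleftrightarrow> \<Phi> H"
proof
  assume "\<Phi> (line_act g H)"
  obtain h k where "inverse_pair g h k" "h \<in> Gmaps" using g by (rule Gmaps_inverse_pairE)
  moreover have "H \<subseteq> points" using H planes_subset_Pow_points by blast
  ultimately show "\<Phi> H"
    using preserved[of h "line_act g H"] \<open>\<Phi> (line_act g H)\<close> Gmaps_line_act_planes[OF g H]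
      inverse_pair.line_act_inverse by metis
qed (rule preserved[OF g H])

section \<open>Binary forms\<close>

text \<open>Homogeneous parameters: P(t) has parameter (1 : t) and P(\<infinity>) has (0 : 1). The two tangent
  vectors are the partial derivatives of \<^term>\<open>curve_vec\<close>; they span the tangent line.\<close>
definition curve_vec :: "'a::field \<Rightarrow> 'a \<Rightarrow> 'a v4" where
  "curve_vec s0 s1 = (s0 ^ 3, s0 ^ 2 * s1, s0 * s1 ^ 2, s1 ^ 3)"

definition tangent_vec0 :: "'a::field \<Rightarrow> 'a \<Rightarrow> 'a v4" where
  "tangent_vec0 s0 s1 = (3 * s0 ^ 2, 2 * s0 * s1, s1 ^ 2, 0)"

definition tangent_vec1 :: "'a::field \<Rightarrow> 'a \<Rightarrow> 'a v4" where
  "tangent_vec1 s0 s1 = (0, s0 ^ 2, 2 * s0 * s1, 3 * s1 ^ 2)"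

definition osc_coeffs :: "'a::field \<Rightarrow> 'a \<Rightarrow> 'a v4" where
  "osc_coeffs t0 t1 = (- (t1 ^ 3), 3 * t0 * t1 ^ 2, - (3 * t0 ^ 2 * t1), t0 ^ 3)"

lemma gmap_curve_vec: "gmap a b c d (curve_vec s0 s1) = curve_vec (a * s0 + c * s1) (b * s0 + d * s1)"
  unfolding gmap_def curve_vec_def by (simp; algebra)

lemma gmap_tangent_vec0:
  "gmap a b c d (tangent_vec0 s0 s1) =
     vadd (sc a (tangent_vec0 (a * s0 + c * s1) (b * s0 + d * s1)))
          (sc b (tangent_vec1 (a * s0 + c * s1) (b * s0 + d * s1)))"
  unfolding gmap_def tangent_vec0_def tangent_vec1_def v4_simps by (simp; algebra)

lemma gmap_tangent_vec1:
  "gmap a b c d (tangent_vec1 s0 s1) =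
     vadd (sc c (tangent_vec0 (a * s0 + c * s1) (b * s0 + d * s1)))
          (sc d (tangent_vec1 (a * s0 + c * s1) (b * s0 + d * s1)))"
  unfolding gmap_def tangent_vec0_def tangent_vec1_def v4_simps by (simp; algebra)

lemma dual4_gmap_osc_coeffs:
  "dual4 (gmap a b c d) (osc_coeffs t0 t1) = osc_coeffs (d * t0 - c * t1) (a * t1 - b * t0)"
proof -
  have "dot4 (osc_coeffs t0 t1) (gmap a b c d v) = dot4 (osc_coeffs (d * t0 - c * t1) (a * t1 - b * t0)) v"
    for v
  proof (cases v rule: prod_cases4)
    case (fields y0 y1 y2 y3)
    show ?thesis unfolding fields gmap_def osc_coeffs_def by (simp add: dot4_tuple) algebra
  qed
  then show ?thesis
    unfolding dual4_def by (simp add: osc_coeffs_def dot4_tuple)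
qed

lemma curve_vec_scale: "curve_vec (k * s0) (k * s1) = sc (k ^ 3) (curve_vec s0 s1)"
  by (simp add: curve_vec_def sc_tuple algebra_simps eval_nat_numeral)

lemma tangent_vec0_scale: "tangent_vec0 (k * s0) (k * s1) = sc (k ^ 2) (tangent_vec0 s0 s1)"
  by (simp add: tangent_vec0_def sc_tuple algebra_simps eval_nat_numeral)

lemma tangent_vec1_scale: "tangent_vec1 (k * s0) (k * s1) = sc (k ^ 2) (tangent_vec1 s0 s1)"
  by (simp add: tangent_vec1_def sc_tuple algebra_simps eval_nat_numeral)

lemma osc_coeffs_scale: "osc_coeffs (k * t0) (k * t1) = sc (k ^ 3) (osc_coeffs t0 t1)"
  by (simp add: osc_coeffs_def sc_tuple algebra_simps eval_nat_numeral)

lemma osc_coeffs_nonzero: "(t0, t1) \<noteq> (0, 0) \<Longrightarrow> osc_coeffs t0 t1 \<noteq> zero4"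
  by (auto simp: osc_coeffs_def zero4_tuple)

lemma substitution_nonzero:
  fixes a b c d :: "'a::field"
  assumes det: "a * d - b * c \<noteq> 0" and s: "(s0, s1) \<noteq> (0, 0)"
  shows "(a * s0 + c * s1, b * s0 + d * s1) \<noteq> (0, 0)"
proof
  assume "(a * s0 + c * s1, b * s0 + d * s1) = (0, 0)"
  moreover have "s0 * (a * d - b * c) = d * (a * s0 + c * s1) - c * (b * s0 + d * s1)"
    and "s1 * (a * d - b * c) = a * (b * s0 + d * s1) - b * (a * s0 + c * s1)"
    by (simp_all add: algebra_simps)
  ultimately show False using det s by simp
qed

lemma homogeneous_param_image:
  fixes F :: "'a::field \<Rightarrow> 'a \<Rightarrow> 'b"
  assumes hom: "\<And>k s0 s1. k \<noteq> 0 \<Longrightarrow> F (k * s0) (k * s1) = F s0 s1"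
  shows "{F s0 s1 | s0 s1. (s0, s1) \<noteq> (0, 0)} = range (F 1) \<union> {F 0 1}"
proof (intro equalityI subsetI)
  fix x assume "x \<in> {F s0 s1 | s0 s1. (s0, s1) \<noteq> (0, 0)}"
  then obtain s0 s1 where x: "x = F s0 s1" and s: "(s0, s1) \<noteq> (0, 0)" by blast
  show "x \<in> range (F 1) \<union> {F 0 1}"
  proof (cases "s0 = 0")
    case True
    then show ?thesis using x s hom[of s1 0 1] by simp
  next
    case False
    then show ?thesis using x hom[of s0 1 "s1 / s0"] by simp
  qed
next
  fix x assume "x \<in> range (F 1) \<union> {F 0 1}"
  then show "x \<in> {F s0 s1 | s0 s1. (s0, s1) \<noteq> (0, 0)}" by force
qed

lemma curve_eq: "curve = {pt (curve_vec s0 s1) | s0 s1. (s0, s1) \<noteq> (0, 0)}"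
proof (subst homogeneous_param_image)
  show "pt (curve_vec (k * s0) (k * s1)) = pt (curve_vec s0 s1)" if "k \<noteq> 0" for k s0 s1 :: 'a
    using that by (simp add: curve_vec_scale pt_sc)
  show "curve = range (\<lambda>s1. pt (curve_vec 1 s1)) \<union> {pt (curve_vec 0 1)}"
    unfolding curve_def by (simp add: Pc_def Pinf_def curve_vec_def)
qed

lemma osc_eq: "osc t = plane (osc_coeffs 1 t)"
  by (simp add: osc_def osc_coeffs_def)

lemma osc_inf_eq: "osc_inf = plane (osc_coeffs 0 (1::'a::field))"
proof -
  have "osc_coeffs 0 (1::'a) = sc (- 1) (1, 0, 0, 0)"
    by (simp add: osc_coeffs_def sc_tuple)
  then show ?thesis by (simp add: osc_inf_def plane_sc)
qed

lemma osc_planes_eq: "osc_planes = {plane (osc_coeffs t0 t1) | t0 t1. (t0, t1) \<noteq> (0, 0)}"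
proof (subst homogeneous_param_image)
  show "plane (osc_coeffs (k * t0) (k * t1)) = plane (osc_coeffs t0 t1)" if "k \<noteq> 0" for k t0 t1 :: 'a
    using that by (simp add: osc_coeffs_scale plane_sc)
  show "osc_planes = range (\<lambda>t1. plane (osc_coeffs 1 t1)) \<union> {plane (osc_coeffs 0 (1::'a))}"
    unfolding osc_planes_def osc_inf_eq by (simp add: osc_eq[abs_def])
qed

lemma tangents_eq:
  assumes three: "(3::'a::field) \<noteq> 0"
  shows "tangents = {join (tangent_vec0 s0 s1) (tangent_vec1 s0 s1) | s0 s1 :: 'a. (s0, s1) \<noteq> (0, 0)}"
proof (subst homogeneous_param_image)
  show "join (tangent_vec0 (k * s0) (k * s1)) (tangent_vec1 (k * s0) (k * s1))
          = join (tangent_vec0 s0 s1) (tangent_vec1 s0 s1)" if "k \<noteq> 0" for k s0 s1 :: 'a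
    using that by (simp add: tangent_vec0_scale tangent_vec1_scale join_sc)
  have "tangent t = join (tangent_vec0 1 t) (tangent_vec1 1 t)" for t :: 'a
  proof -
    have "join (vadd (sc (1 / 3) (tangent_vec0 1 t)) (sc (t / 3) (tangent_vec1 1 t)))
               (vadd (sc 0 (tangent_vec0 1 t)) (sc 1 (tangent_vec1 1 t)))
          = join (tangent_vec0 1 t) (tangent_vec1 1 t)"
      by (rule join_lin_comb) (use three in simp)
    then show ?thesis
      using three by (simp add: tangent_def tangent_vec0_def tangent_vec1_def v4_simps
          field_simps eval_nat_numeral)
  qed
  moreover have "tangent_inf = join (tangent_vec0 0 1) (tangent_vec1 0 (1::'a))"
  proof -
    have "join (vadd (sc 0 (tangent_vec0 0 1)) (sc (1 / 3) (tangent_vec1 0 1)))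
               (vadd (sc 1 (tangent_vec0 0 1)) (sc 0 (tangent_vec1 0 (1::'a))))
          = join (tangent_vec0 0 1) (tangent_vec1 0 1)"
      by (rule join_lin_comb) (use three in simp)
    then show ?thesis
      using three by (simp add: tangent_inf_def tangent_vec0_def tangent_vec1_def v4_simps)
  qed
  ultimately show "tangents = range (\<lambda>s1. join (tangent_vec0 1 s1) (tangent_vec1 1 s1))
      \<union> {join (tangent_vec0 0 1) (tangent_vec1 0 (1::'a))}"
    unfolding tangents_def by simp
qed

section \<open>Invariance of the orbit distributions\<close>

lemma osc_planes_subset_planes: "osc_planes \<subseteq> planes"
  unfolding osc_planes_eq planes_def using osc_coeffs_nonzero by blast

lemma Gmaps_image_in_curve_iff:
  fixes g :: "'a::field v4 \<Rightarrow> 'a v4"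
  assumes "g \<in> Gmaps" "P \<in> points"
  shows "g ` P \<in> curve \<longleftrightarrow> P \<in> curve"
proof (rule Gmaps_image_iff[OF _ assms])
  fix g :: "'a v4 \<Rightarrow> 'a v4" and P :: "'a v4 set" assume "g \<in> Gmaps" "P \<in> curve"
  then obtain a b c d s0 s1 where g: "g = gmap a b c d" "a * d - b * c \<noteq> 0"
    and P: "P = pt (curve_vec s0 s1)" "(s0, s1) \<noteq> (0, 0)"
    unfolding curve_eq by (blast elim: GmapsE)
  then have "g ` P = pt (curve_vec (a * s0 + c * s1) (b * s0 + d * s1))"
    by (simp add: image_pt_linear4[OF gmap_linear4] gmap_curve_vec)
  then show "g ` P \<in> curve"
    using substitution_nonzero[OF g(2) P(2)] unfolding curve_eq by blast
qed

lemma Gmaps_line_act_Int_curve: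
  assumes g: "g \<in> Gmaps" and S: "S \<subseteq> points"
  shows "line_act g S \<inter> curve = line_act g (S \<inter> curve)"
proof -
  obtain h k where "inverse_pair g h k" using g by (rule Gmaps_inverse_pairE)
  then show ?thesis
    using inverse_pair.line_act_Int_invariant Gmaps_image_in_curve_iff[OF g] S by blast
qed

lemma line_act_gmap_osc_plane:
  assumes "a * d - b * c \<noteq> 0"
  shows "line_act (gmap a b c d) (plane (osc_coeffs t0 t1))
           = plane (osc_coeffs (a * t0 + c * t1) (b * t0 + d * t1))"
proof -
  interpret inverse_pair "gmap a b c d" "gmap d (- b) (- c) a" "(a * d - b * c) ^ 3"
    by (rule gmap_inverse_pair[OF assms])
  show ?thesis
    unfolding line_act_plane dual4_gmap_osc_coeffs by (simp add: algebra_simps)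
qed

lemma Gmaps_line_act_in_osc_planes_iff:
  fixes g :: "'a::field v4 \<Rightarrow> 'a v4"
  assumes "g \<in> Gmaps" "H \<in> planes"
  shows "line_act g H \<in> osc_planes \<longleftrightarrow> H \<in> osc_planes"
proof (rule Gmaps_line_act_iff[OF _ assms])
  fix g :: "'a v4 \<Rightarrow> 'a v4" and H :: "'a v4 set set" assume "g \<in> Gmaps" "H \<in> osc_planes"
  then obtain a b c d t0 t1 where g: "g = gmap a b c d" "a * d - b * c \<noteq> 0"
    and H: "H = plane (osc_coeffs t0 t1)" "(t0, t1) \<noteq> (0, 0)"
    unfolding osc_planes_eq by (blast elim: GmapsE)
  show "line_act g H \<in> osc_planes"
    unfolding osc_planes_eq g(1) H(1) line_act_gmap_osc_plane[OF g(2)]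
    using substitution_nonzero[OF g(2) H(2)] by blast
qed

lemma Gmaps_line_act_tangent:
  assumes three: "(3::'a::field) \<noteq> 0" and g: "g \<in> Gmaps" and L: "L \<in> (tangents :: 'a v4 set set set)"
  shows "line_act g L \<in> tangents"
proof -
  obtain a b c d s0 s1 where g: "g = gmap a b c d" "a * d - b * c \<noteq> 0"
    and L: "L = join (tangent_vec0 s0 s1) (tangent_vec1 s0 s1)" "(s0, s1) \<noteq> (0, 0)"
    using g L unfolding tangents_eq[OF three] by (blast elim: GmapsE)
  have "line_act g L = join (tangent_vec0 (a * s0 + c * s1) (b * s0 + d * s1))
                            (tangent_vec1 (a * s0 + c * s1) (b * s0 + d * s1))"
    unfolding L g line_act_join_linear4[OF gmap_linear4] gmap_tangent_vec0 gmap_tangent_vec1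
    by (rule join_lin_comb[OF g(2)])
  then show ?thesis
    unfolding tangents_eq[OF three] using substitution_nonzero[OF g(2) L(2)] by blast
qed

lemma Gmaps_image_on_tangent_iff:
  assumes "(3::'a::field) \<noteq> 0" "g \<in> Gmaps" "P \<in> (points :: 'a v4 set set)"
  shows "(\<exists>L\<in>tangents. g ` P \<in> L) \<longleftrightarrow> (\<exists>L\<in>tangents. P \<in> L)"
proof (rule Gmaps_image_iff[where \<Phi> = "\<lambda>P. \<exists>L\<in>tangents. P \<in> L", OF _ assms(2,3)])
  fix g :: "'a v4 \<Rightarrow> 'a v4" and P :: "'a v4 set" assume g: "g \<in> Gmaps" and "\<exists>L\<in>tangents. P \<in> L"
  then obtain L where "L \<in> tangents" "P \<in> L" by blast
  then show "\<exists>L\<in>tangents. g ` P \<in> L"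
    using Gmaps_line_act_tangent[OF assms(1) g] unfolding line_act_def by blast
qed

lemma n_osc_Gmaps_image:
  assumes g: "g \<in> Gmaps" and P: "P \<in> points"
  shows "n_osc (g ` P) = n_osc P"
proof -
  obtain h k where "inverse_pair g h k" using g by (rule Gmaps_inverse_pairE)
  then have "card {H \<in> osc_planes. line_act g {P} \<subseteq> H} = card {H \<in> osc_planes. {P} \<subseteq> H}"
    by (rule inverse_pair.card_planes_containing_line_act)
      (use osc_planes_subset_planes Gmaps_line_act_in_osc_planes_iff[OF g] P in auto)
  then show ?thesis by (simp add: n_osc_def line_act_def)
qed

lemma OD0_Gmaps_line_act:
  assumes three: "(3::'a::field) \<noteq> 0" and g: "g \<in> Gmaps" and l: "l \<subseteq> (points :: 'a v4 set set)"
  shows "OD0 (line_act g l) = OD0 l"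
proof -
  obtain h k where "inverse_pair g h k" using g by (rule Gmaps_inverse_pairE)
  then interpret inverse_pair g h k .
  have "g ` P \<in> C \<longleftrightarrow> P \<in> C" if "C \<in> {PC1, PC2, PC3, PC4, PC5}" "P \<in> points" for C P
    using that
    by (elim insertE emptyE) (simp_all add: PC1_def PC2_def PC3_def PC4_def PC5_def
        Gmaps_image_points[OF g] Gmaps_image_in_curve_iff[OF g]
        Gmaps_image_on_tangent_iff[OF three g] n_osc_Gmaps_image[OF g])
  then show ?thesis
    unfolding OD0_def using card_line_act_Int_invariant[OF _ l] by simp
qed

lemma OD2_Gmaps_line_act:
  assumes g: "g \<in> Gmaps" and l: "l \<subseteq> points"
  shows "OD2 (line_act g l) = OD2 l"
proof -
  obtain h k where "inverse_pair g h k" using g by (rule Gmaps_inverse_pairE)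
  then interpret inverse_pair g h k .
  have "card (line_act g H \<inter> curve) = card (H \<inter> curve)"
    and "line_act g H \<inter> curve = {} \<longleftrightarrow> H \<inter> curve = {}" if "H \<in> planes" for H
  proof -
    have H: "H \<subseteq> points" using that planes_subset_Pow_points by blast
    show "card (line_act g H \<inter> curve) = card (H \<inter> curve)"
      using card_line_act_Int_invariant[OF Gmaps_image_in_curve_iff[OF g] H] .
    show "line_act g H \<inter> curve = {} \<longleftrightarrow> H \<inter> curve = {}"
      using Gmaps_line_act_Int_curve[OF g H] by (simp add: line_act_def)
  qed
  then have "line_act g H \<in> D \<longleftrightarrow> H \<in> D" if "D \<in> {HC1, HC2, HC3, HC4, HC5}" "H \<in> planes" for D H
    using that
    by (elim insertE emptyE) (simp_all add: HC1_def HC2_def HC3_def HC4_def HC5_def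
        Gmaps_line_act_planes[OF g] Gmaps_line_act_in_osc_planes_iff[OF g])
  moreover have "D \<subseteq> planes" if "D \<in> {HC1, HC2, HC3, HC4, HC5}" for D
    using that osc_planes_subset_planes by (auto simp: HC1_def HC2_def HC3_def HC4_def HC5_def)
  ultimately have "card {H \<in> D. line_act g l \<subseteq> H} = card {H \<in> D. l \<subseteq> H}"
    if "D \<in> {HC1, HC2, HC3, HC4, HC5}" for D
    using that by (intro card_planes_containing_line_act[OF _ _ l]) auto
  then show ?thesis
    unfolding OD2_def by simp
qed

section \<open>The lines of L1 form one orbit\<close>

text \<open>The line \<open>Y0 = Y3 = 0\<close>.\<close>
definition axis :: "'a::field v4 set set" where
  "axis = osc_inf \<inter> osc 0"

lemma plane_osc_coeffs_proportional:
  assumes s: "(s0, s1) \<noteq> (0, 0)" and t: "(t0, t1) \<noteq> (0, 0)" and det: "t0 * s1 - t1 * s0 = (0::'a::field)"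
  shows "plane (osc_coeffs s0 s1) = plane (osc_coeffs t0 t1)"
proof -
  obtain k where k: "k \<noteq> 0" "s0 = k * t0" "s1 = k * t1"
  proof (cases "t0 = 0")
    case True
    with t det have "t1 \<noteq> 0" "s0 = 0" by auto
    then show ?thesis using that[of "s1 / t1"] s True by simp
  next
    case False
    then have "s1 = (s0 / t0) * t1" using det by (simp add: field_simps)
    then show ?thesis using that[of "s0 / t0"] s False by auto
  qed
  then show ?thesis by (simp add: osc_coeffs_scale plane_sc)
qed

lemma Pinf_in_osc_inf: "Pinf \<in> osc_inf"
  by (simp add: Pinf_def osc_inf_def pt_tuple_in_plane_iff tuple_eq_zero4_iff)

lemma Pinf_notin_osc: "Pinf \<notin> osc t"
  by (simp add: Pinf_def osc_def pt_tuple_in_plane_iff tuple_eq_zero4_iff)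

lemma osc_inf_neq_osc: "osc_inf \<noteq> osc t"
  using Pinf_in_osc_inf Pinf_notin_osc by metis

lemma Gmaps_line_act_axis_in_L1:
  assumes g: "g \<in> Gmaps" shows "line_act g axis \<in> L1"
proof -
  obtain h k where "inverse_pair g h k" using g by (rule Gmaps_inverse_pairE)
  then have "line_act g axis = line_act g osc_inf \<inter> line_act g (osc 0)"
    unfolding axis_def osc_inf_def osc_def
    by (rule inverse_pair.line_act_Int) (rule plane_subset_points)+
  moreover have "line_act g osc_inf \<noteq> line_act g (osc 0)"
  proof -
    have "osc_inf \<in> Pow points" "osc 0 \<in> Pow points"
      by (simp_all add: osc_inf_def osc_def plane_subset_points)
    then show ?thesis
      using inj_onD[OF inverse_pair.inj_on_line_act[OF \<open>inverse_pair g h k\<close>]] osc_inf_neq_osc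
      by metis
  qed
  moreover have "line_act g osc_inf \<in> osc_planes" "line_act g (osc 0) \<in> osc_planes"
    using Gmaps_line_act_in_osc_planes_iff[OF g] osc_planes_subset_planes
    by (auto simp: osc_planes_def)
  ultimately show ?thesis
    unfolding L1_def lines_def using osc_planes_subset_planes by blast
qed

lemma L1_in_Gmaps_orbit_axis:
  assumes "l \<in> L1" shows "\<exists>g\<in>Gmaps. l = line_act g axis"
proof -
  obtain s0 s1 t0 t1 where H: "(s0, s1) \<noteq> (0, 0)" and K: "(t0, t1) \<noteq> (0, 0)"
    and ne: "plane (osc_coeffs s0 s1) \<noteq> plane (osc_coeffs t0 t1)"
    and l: "l = plane (osc_coeffs s0 s1) \<inter> plane (osc_coeffs t0 t1)"
    using assms unfolding L1_def osc_planes_eq by blast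
  then have det: "t0 * s1 - t1 * s0 \<noteq> 0"
    using plane_osc_coeffs_proportional by blast
  define g where "g = gmap t0 t1 s0 s1"
  have "g \<in> Gmaps" unfolding g_def Gmaps_def using det by blast
  then obtain h k where "inverse_pair g h k" by (rule Gmaps_inverse_pairE)
  then have "line_act g axis = line_act g osc_inf \<inter> line_act g (osc 0)"
    unfolding axis_def osc_inf_def osc_def
    by (rule inverse_pair.line_act_Int) (rule plane_subset_points)+
  also have "\<dots> = l"
    unfolding l g_def osc_inf_eq osc_eq line_act_gmap_osc_plane[OF det] by simp
  finally show ?thesis using \<open>g \<in> Gmaps\<close> by blast
qed

lemma L1_eq_Gmaps_orbit_axis: "L1 = {line_act g axis | g. g \<in> Gmaps}"
  using Gmaps_line_act_axis_in_L1 L1_in_Gmaps_orbit_axis by blast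

section \<open>Points of the axis\<close>

definition axis_pt :: "'a::field \<Rightarrow> 'a v4 set" where
  "axis_pt y = pt (0, 1, y, 0)"

definition axis_pt_inf :: "'a::field v4 set" where
  "axis_pt_inf = pt (0, 0, 1, 0)"

lemma axis_eq: "axis = insert axis_pt_inf (range (axis_pt :: 'a::field \<Rightarrow> _))"
proof (intro equalityI subsetI)
  fix P :: "'a v4 set" assume P: "P \<in> axis"
  then have "P \<in> points" unfolding axis_def osc_inf_def using plane_subset_points by blast
  then obtain v0 v1 v2 v3 where v: "P = pt (v0, v1, v2, v3)" "(v0, v1, v2, v3) \<noteq> zero4"
    by (metis pointsE prod_cases4)
  with P have "v0 = 0" "v3 = 0"
    by (simp_all add: axis_def osc_inf_def osc_def pt_tuple_in_plane_iff)
  show "P \<in> insert axis_pt_inf (range axis_pt)"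
  proof (cases "v1 = 0")
    case True
    with v \<open>v0 = 0\<close> \<open>v3 = 0\<close> have "P = axis_pt_inf"
      by (auto simp: axis_pt_inf_def pt_tuple_eq_iff tuple_eq_zero4_iff intro!: exI[of _ "1 / v2"])
    then show ?thesis by simp
  next
    case False
    with v \<open>v0 = 0\<close> \<open>v3 = 0\<close> have "P = axis_pt (v2 / v1)"
      by (auto simp: axis_pt_def pt_tuple_eq_iff intro!: exI[of _ "1 / v1"])
    then show ?thesis by simp
  qed
qed (auto simp: axis_def axis_pt_def axis_pt_inf_def osc_inf_def osc_def pt_tuple_in_plane_iff
    tuple_eq_zero4_iff)

lemma axis_pt_in_axis: "axis_pt y \<in> axis"
  and axis_pt_inf_in_axis: "axis_pt_inf \<in> axis"
  unfolding axis_eq by simp_all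

lemma axis_subset_points: "axis \<subseteq> points"
  unfolding axis_def osc_inf_def using plane_subset_points by blast

lemma axis_Int_curve: "axis \<inter> curve = {}"
proof -
  have "Pc t \<notin> osc_inf" for t :: 'a
    by (simp add: Pc_def osc_inf_def pt_tuple_in_plane_iff tuple_eq_zero4_iff)
  then show ?thesis
    unfolding axis_def curve_def using Pinf_notin_osc by blast
qed

lemma Pc_in_osc_iff: "Pc s \<in> osc t \<longleftrightarrow> s = (t::'a::field)"
proof -
  have "Pc s \<in> osc t \<longleftrightarrow> (s - t) ^ 3 = 0"
    by (simp add: Pc_def osc_def pt_tuple_in_plane_iff tuple_eq_zero4_iff
        power2_eq_square power3_eq_cube algebra_simps)
  then show ?thesis by simp
qed

lemma inj_osc: "inj (osc :: 'a::field \<Rightarrow> _)"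
  by (rule injI) (metis Pc_in_osc_iff)

lemma n_osc_in_osc_inf:
  fixes P :: "'a::{field,finite} v4 set"
  assumes "P \<in> osc_inf"
  shows "n_osc P = Suc (card {t. P \<in> osc t})"
proof -
  have "{H \<in> osc_planes. P \<in> H} = insert osc_inf (osc ` {t. P \<in> osc t})"
    using assms unfolding osc_planes_def by blast
  moreover have "osc_inf \<notin> osc ` {t. P \<in> osc t}"
    using osc_inf_neq_osc by blast
  ultimately have "n_osc P = Suc (card (osc ` {t. P \<in> osc t}))"
    unfolding n_osc_def by simp
  also have "card (osc ` {t. P \<in> osc t}) = card {t. P \<in> osc t}"
    by (rule card_image) (rule inj_on_subset[OF inj_osc], simp)
  finally show ?thesis .
qed

lemma n_osc_axis_pt:
  assumes three: "(3::'a::{field,finite}) \<noteq> 0"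
  shows "n_osc (axis_pt y) = (if y = (0::'a) then 2 else 3)"
proof -
  have "axis_pt y \<in> osc t \<longleftrightarrow> t = 0 \<or> t = y" for t
  proof -
    have "axis_pt y \<in> osc t \<longleftrightarrow> 3 * (t * (t - y)) = 0"
      by (simp add: axis_pt_def osc_def pt_tuple_in_plane_iff tuple_eq_zero4_iff
          algebra_simps power2_eq_square)
    then show ?thesis using three by simp
  qed
  then have "{t. axis_pt y \<in> osc t} = {0, y}" by blast
  moreover have "axis_pt y \<in> osc_inf"
    by (simp add: axis_pt_def osc_inf_def pt_tuple_in_plane_iff tuple_eq_zero4_iff)
  ultimately show ?thesis by (simp add: n_osc_in_osc_inf)
qed

lemma n_osc_axis_pt_inf:
  assumes three: "(3::'a::{field,finite}) \<noteq> 0"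
  shows "n_osc (axis_pt_inf :: 'a v4 set) = 2"
proof -
  have "(axis_pt_inf :: 'a v4 set) \<in> osc t \<longleftrightarrow> t = 0" for t
    using three by (simp add: axis_pt_inf_def osc_def pt_tuple_in_plane_iff tuple_eq_zero4_iff)
  then have "{t. (axis_pt_inf :: 'a v4 set) \<in> osc t} = {0}" by blast
  moreover have "(axis_pt_inf :: 'a v4 set) \<in> osc_inf"
    by (simp add: axis_pt_inf_def osc_inf_def pt_tuple_in_plane_iff tuple_eq_zero4_iff)
  ultimately show ?thesis by (simp add: n_osc_in_osc_inf)
qed

lemma axis_pt_on_tangent_iff:
  assumes three: "(3::'a::field) \<noteq> 0"
  shows "(\<exists>L\<in>tangents. axis_pt y \<in> L) \<longleftrightarrow> y = (0::'a)"
proof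
  assume "\<exists>L\<in>tangents. axis_pt y \<in> L"
  then obtain s0 s1 a b :: 'a
    where "axis_pt y = pt (vadd (sc a (tangent_vec0 s0 s1)) (sc b (tangent_vec1 s0 s1)))"
    unfolding tangents_eq[OF three] join_def by blast
  then have "pt (0, 1, y, 0) = pt (3 * a * s0 ^ 2, 2 * a * s0 * s1 + b * s0 ^ 2,
                                  a * s1 ^ 2 + 2 * b * s0 * s1, 3 * b * s1 ^ 2)"
    by (simp add: axis_pt_def tangent_vec0_def tangent_vec1_def v4_simps algebra_simps)
  then obtain c where c: "c \<noteq> 0" and e0: "3 * a * s0 ^ 2 = c * 0"
    and e1: "2 * a * s0 * s1 + b * s0 ^ 2 = c * 1" and e2: "a * s1 ^ 2 + 2 * b * s0 * s1 = c * y"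
    and e3: "3 * b * s1 ^ 2 = c * 0"
    unfolding pt_tuple_eq_iff by blast
  have "s0 \<noteq> 0" using c e1 by auto
  then have "a = 0" using e0 three by simp
  then have "b \<noteq> 0" using c e1 by auto
  then have "s1 = 0" using e3 three by simp
  then show "y = 0" using c e2 \<open>a = 0\<close> by simp
next
  assume "y = 0"
  have "axis_pt 0 = pt (vadd (sc 0 (tangent_vec0 1 0)) (sc 1 (tangent_vec1 1 (0::'a))))"
    by (simp add: axis_pt_def tangent_vec0_def tangent_vec1_def v4_simps)
  then have "axis_pt 0 \<in> join (tangent_vec0 1 0) (tangent_vec1 1 (0::'a))"
    unfolding join_def by (intro CollectI exI[of _ 0] exI[of _ 1]) simp
  moreover have "join (tangent_vec0 1 0) (tangent_vec1 1 (0::'a)) \<in> tangents"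
    unfolding tangents_eq[OF three] by (intro CollectI exI[of _ 1] exI[of _ 0]) simp
  ultimately show "\<exists>L\<in>tangents. axis_pt y \<in> L"
    using \<open>y = 0\<close> by blast
qed

lemma axis_pt_inf_on_tangent: "axis_pt_inf \<in> (tangent_inf :: 'a::field v4 set set)"
proof -
  have "axis_pt_inf = pt (vadd (sc 0 (0, 0, 0, 1)) (sc 1 (0, 0, 1, 0)) :: 'a v4)"
    by (simp add: axis_pt_inf_def v4_simps)
  then show ?thesis unfolding tangent_inf_def join_def by (intro CollectI exI[of _ 0] exI[of _ 1]) simp
qed

lemma OD0_axis:
  assumes three: "(3::'a::{field,finite}) \<noteq> 0"
  shows "OD0 (axis :: 'a v4 set set) = [0, 2, card (UNIV::'a set) - 1, 0, 0]"
proof -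
  have pts: "P \<in> points" "P \<notin> curve" if "P \<in> axis" for P :: "'a v4 set"
    using that axis_subset_points axis_Int_curve by blast+
  have "axis \<inter> PC2 = {axis_pt 0, axis_pt_inf :: 'a v4 set}"
  proof (intro equalityI subsetI)
    fix P :: "'a v4 set" assume "P \<in> axis \<inter> PC2"
    then have "P \<in> axis" and tangent: "\<exists>L\<in>tangents. P \<in> L" unfolding PC2_def by auto
    then consider "P = axis_pt_inf" | y where "P = axis_pt y" unfolding axis_eq by blast
    then show "P \<in> {axis_pt 0, axis_pt_inf}"
    proof cases
      case (2 y)
      then have "y = 0" using tangent axis_pt_on_tangent_iff[OF three] by blast
      with 2 show ?thesis by simp
    qed simp
  next
    have "\<exists>L\<in>tangents. axis_pt_inf \<in> (L :: 'a v4 set set)"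
      using axis_pt_inf_on_tangent unfolding tangents_def by blast
    then show "P \<in> axis \<inter> PC2" if "P \<in> {axis_pt 0, axis_pt_inf}" for P :: "'a v4 set"
      using that pts axis_pt_in_axis axis_pt_inf_in_axis axis_pt_on_tangent_iff[OF three, of 0] unfolding PC2_def by auto
  qed
  moreover have "axis \<inter> PC3 = axis_pt ` (UNIV - {0::'a})"
  proof (intro equalityI subsetI)
    fix P :: "'a v4 set" assume "P \<in> axis \<inter> PC3"
    then have "P \<in> axis" "n_osc P = 3" unfolding PC3_def by auto
    then show "P \<in> axis_pt ` (UNIV - {0})"
      unfolding axis_eq using n_osc_axis_pt[OF three] n_osc_axis_pt_inf[OF three]
      by (auto split: if_splits)
  next
    fix P :: "'a v4 set" assume "P \<in> axis_pt ` (UNIV - {0})"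
    then show "P \<in> axis \<inter> PC3"
      using pts axis_pt_in_axis n_osc_axis_pt[OF three] unfolding PC3_def by auto
  qed
  moreover have "(axis :: 'a v4 set set) \<inter> PC1 = {}" "(axis :: 'a v4 set set) \<inter> PC4 = {}"
    "(axis :: 'a v4 set set) \<inter> PC5 = {}"
  proof -
    have "n_osc P \<ge> 2" if "P \<in> axis" for P :: "'a v4 set"
      using that n_osc_axis_pt[OF three] n_osc_axis_pt_inf[OF three] unfolding axis_eq by auto
    then show "(axis :: 'a v4 set set) \<inter> PC1 = {}" "(axis :: 'a v4 set set) \<inter> PC4 = {}"
    "(axis :: 'a v4 set set) \<inter> PC5 = {}"
      using axis_Int_curve unfolding PC1_def PC4_def PC5_def by fastforce+
  qed
  moreover have "inj (axis_pt :: 'a \<Rightarrow> _)"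
    by (rule injI) (simp add: axis_pt_def pt_tuple_eq_iff)
  moreover have "axis_pt 0 \<noteq> (axis_pt_inf :: 'a v4 set)"
    by (simp add: axis_pt_def axis_pt_inf_def pt_tuple_eq_iff)
  ultimately show ?thesis
    unfolding OD0_def by (simp add: card_image inj_on_subset card_Diff_singleton)
qed

section \<open>Cube roots in a finite field\<close>

definition cube_roots :: "'a::field \<Rightarrow> 'a set" where
  "cube_roots c = {t. t ^ 3 = c}"

lemma cube_roots_0 [simp]: "cube_roots 0 = {0}"
  unfolding cube_roots_def by auto

lemma card_cube_roots_nonzero:
  fixes c :: "'a::field"
  assumes "c \<noteq> 0"
  shows "cube_roots c = {} \<or> card (cube_roots c) = card (cube_roots (1::'a))"
proof (cases "cube_roots c = {}")
  case False
  then obtain x where x: "x ^ 3 = c" unfolding cube_roots_def by auto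
  with assms have "x \<noteq> 0" by auto
  have "cube_roots c = (\<lambda>w. x * w) ` cube_roots 1"
  proof (intro equalityI subsetI)
    fix t assume "t \<in> cube_roots c"
    then have "t = x * (t / x)" "t / x \<in> cube_roots 1"
      using x \<open>x \<noteq> 0\<close> assms by (simp_all add: cube_roots_def power_divide)
    then show "t \<in> (\<lambda>w. x * w) ` cube_roots 1" by blast
  qed (auto simp: cube_roots_def x power_mult_distrib)
  moreover have "inj_on (\<lambda>w. x * w) (cube_roots 1)"
    using \<open>x \<noteq> 0\<close> by (auto intro: inj_onI)
  ultimately show ?thesis by (simp add: card_image)
qed simp

lemma card_cube_roots_1:
  assumes three: "(3::'a::field) \<noteq> 0"
  shows "card (cube_roots (1::'a)) = 1 \<or> card (cube_roots (1::'a)) = 3"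
proof (cases "\<exists>w::'a. w ^ 2 + w + 1 = 0")
  case False
  have "x = 1" if "x ^ 3 = 1" for x :: 'a
  proof -
    have "(x - 1) * (x ^ 2 + x + 1) = 0"
      using that by (simp add: algebra_simps power2_eq_square power3_eq_cube)
    then show ?thesis using False by simp
  qed
  then have "cube_roots (1::'a) = {1}"
    unfolding cube_roots_def by auto
  then show ?thesis by simp
next
  case True
  then obtain w :: 'a where w: "w ^ 2 + w + 1 = 0" by blast
  have "x ^ 3 = 1 \<longleftrightarrow> x = 1 \<or> x = w \<or> x = - 1 - w" for x :: 'a
  proof -
    have "x ^ 3 - 1 = (x - 1) * ((x - w) * (x - (- 1 - w))) + (x - 1) * (w ^ 2 + w + 1)"
      by (simp add: algebra_simps power2_eq_square power3_eq_cube)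
    then have "x ^ 3 - 1 = (x - 1) * ((x - w) * (x - (- 1 - w)))"
      using w by simp
    then have "x ^ 3 = 1 \<longleftrightarrow> (x - 1) * ((x - w) * (x - (- 1 - w))) = 0"
      by (metis right_minus_eq)
    then show ?thesis by simp
  qed
  then have "cube_roots 1 = {1, w, - 1 - w}"
    unfolding cube_roots_def by auto
  \<comment> \<open>Any coincidence among the three roots forces \<open>3 = 0\<close>.\<close>
  moreover have "w \<noteq> 1" "- 1 - w \<noteq> 1" "w \<noteq> - 1 - w"
  proof -
    have "(w - 1) * (w + 2) + 3 = w ^ 2 + w + 1" "(2 * w + 1) ^ 2 + 3 = 4 * (w ^ 2 + w + 1)"
      by (simp_all add: algebra_simps power2_eq_square)
    then have f: "(w - 1) * (w + 2) + 3 = 0" "(2 * w + 1) ^ 2 + 3 = 0"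
      using w by simp_all
    show "w \<noteq> 1" using f(1) three by auto
    show "- 1 - w \<noteq> 1"
    proof
      assume "- 1 - w = 1"
      then have "w + 2 = 0" by (simp add: algebra_simps)
      then show False using f(1) three by simp
    qed
    show "w \<noteq> - 1 - w"
    proof
      assume "w = - 1 - w"
      then have "2 * w + 1 = 0" by (simp add: algebra_simps)
      then show False using f(2) three by simp
    qed
  qed
  ultimately show ?thesis by simp
qed

lemma card_nonzero_eq_cube_fibres:
  "card (UNIV :: 'a::{field,finite} set) - 1
     = card (cube_roots (1::'a)) * card {c::'a. c \<noteq> 0 \<and> cube_roots c \<noteq> {}}"
proof -
  define I where "I = {c::'a. c \<noteq> 0 \<and> cube_roots c \<noteq> {}}"
  have "UNIV - {0::'a} = (\<Union>c\<in>I. cube_roots c)"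
    unfolding I_def cube_roots_def by auto
  then have "card (UNIV - {0::'a}) = (\<Sum>c\<in>I. card (cube_roots c))"
    by (simp only:) (rule card_UN_disjoint, auto simp: cube_roots_def)
  also have "\<dots> = (\<Sum>c\<in>I. card (cube_roots (1::'a)))"
    using card_cube_roots_nonzero unfolding I_def by (intro sum.cong) auto
  finally show ?thesis
    unfolding I_def by (simp add: card_Diff_singleton)
qed

lemma power_card_minus_one_eq_1:
  fixes x :: "'a::{field,finite}"
  assumes "x \<noteq> 0"
  shows "x ^ (card (UNIV :: 'a set) - 1) = 1"
proof -
  have "(\<Prod>y\<in>UNIV - {0}. x * y) = (\<Prod>y\<in>UNIV - {0::'a}. y)"
    by (rule prod.reindex_bij_witness[of _ "\<lambda>y. y / x" "\<lambda>y. x * y"]) (use assms in auto)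
  then show ?thesis
    by (simp add: prod.distrib card_Diff_singleton)
qed

lemma card_roots_of_unity_le:
  assumes "0 < m"
  shows "card {x :: 'a::{comm_ring_1,ring_no_zero_divisors}. x ^ m = 1} \<le> m"
proof -
  define p :: "'a poly" where "p = monom 1 m - 1"
  have "coeff p m = 1"
    using assms unfolding p_def by simp
  then have "card {x. poly p x = 0} \<le> degree p"
    by (intro card_poly_roots_bound) auto
  also have "degree p \<le> m"
    unfolding p_def by (simp add: degree_diff_le degree_monom_le)
  finally show ?thesis unfolding p_def by (simp add: poly_monom)
qed

lemma card_cube_roots_1_eq_3:
  assumes three: "(3::'a::{field,finite}) \<noteq> 0" and dvd: "3 dvd card (UNIV :: 'a set) - 1"
  shows "card (cube_roots (1::'a)) = 3"
proof (rule ccontr)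
  assume "card (cube_roots (1::'a)) \<noteq> 3"
  then have "card (cube_roots (1::'a)) = 1" using card_cube_roots_1[OF three] by blast
  moreover have "1 \<in> cube_roots (1::'a)" by (simp add: cube_roots_def)
  ultimately have roots: "cube_roots (1::'a) = {1}" by (metis card_1_singletonE singletonD)
  obtain m where m: "card (UNIV :: 'a set) - 1 = 3 * m" using dvd by blast
  have "card {0::'a, 1} \<le> card (UNIV :: 'a set)" by (rule card_mono) simp_all
  with m have "0 < m" and m_less: "m < card (UNIV - {0::'a})" by (simp_all add: card_Diff_singleton)
  \<comment> \<open>At most \<open>m\<close> elements satisfy \<open>y ^ m = 1\<close>, so some \<open>y \<noteq> 0\<close> does not; by Fermat,
    \<open>y ^ m\<close> is then a cube root of unity other than 1.\<close>
  have "\<not> UNIV - {0::'a} \<subseteq> {x. x ^ m = 1}"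
  proof
    assume "UNIV - {0::'a} \<subseteq> {x. x ^ m = 1}"
    then have "card (UNIV - {0::'a}) \<le> card {x::'a. x ^ m = 1}" by (intro card_mono) simp_all
    with card_roots_of_unity_le[OF \<open>0 < m\<close>, where 'a='a] m_less show False by linarith
  qed
  then obtain y :: 'a where "y \<noteq> 0" "y ^ m \<noteq> 1" by blast
  have "(y ^ m) ^ 3 = y ^ (card (UNIV :: 'a set) - 1)"
    unfolding m by (simp add: power_mult[symmetric] mult.commute)
  also have "\<dots> = 1" by (rule power_card_minus_one_eq_1[OF \<open>y \<noteq> 0\<close>])
  finally have "y ^ m \<in> cube_roots 1" by (simp add: cube_roots_def)
  with roots \<open>y ^ m \<noteq> 1\<close> show False by simp
qed

lemma card_cube_roots_if_not_dvd:
  assumes three: "(3::'a::{field,finite}) \<noteq> 0" and not_dvd: "\<not> 3 dvd card (UNIV :: 'a set) - 1"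
  shows "card (cube_roots (c::'a)) = 1"
proof (cases "c = 0")
  case False
  define I where "I = {c::'a. c \<noteq> 0 \<and> cube_roots c \<noteq> {}}"
  have fibres: "card (UNIV :: 'a set) - 1 = card (cube_roots (1::'a)) * card I"
    unfolding I_def by (rule card_nonzero_eq_cube_fibres)
  with not_dvd card_cube_roots_1[OF three] have one: "card (cube_roots (1::'a)) = 1" by auto
  with fibres have "card I = card (UNIV - {0::'a})" by (simp add: card_Diff_singleton)
  then have "I = UNIV - {0}" by (intro card_subset_eq) (auto simp: I_def)
  with False have "cube_roots c \<noteq> {}" by (auto simp: I_def)
  then have "card (cube_roots c) = card (cube_roots (1::'a))"
    using card_cube_roots_nonzero[OF False] by blast
  with one show ?thesis by simp
qed simp

lemma cube_root_counts_if_dvd: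
  assumes three: "(3::'a::{field,finite}) \<noteq> 0" and dvd: "3 dvd card (UNIV :: 'a set) - 1"
  shows "card {c::'a. card (cube_roots c) = 3} = (card (UNIV :: 'a set) - 1) div 3"
    and "card {c::'a. cube_roots c = {}} = 2 * (card (UNIV :: 'a set) - 1) div 3"
    and "{c::'a. c \<noteq> 0 \<and> card (cube_roots c) = 1} = {}"
proof -
  define I where "I = {c::'a. c \<noteq> 0 \<and> cube_roots c \<noteq> {}}"
  have three_roots: "card (cube_roots (1::'a)) = 3"
    by (rule card_cube_roots_1_eq_3[OF three dvd])
  then have fibres: "card (UNIV :: 'a set) - 1 = 3 * card I"
    unfolding I_def using card_nonzero_eq_cube_fibres[where 'a='a] by simp
  have "{c::'a. card (cube_roots c) = 3} = I"
  proof (intro equalityI subsetI)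
    fix c :: 'a assume "c \<in> {c. card (cube_roots c) = 3}"
    then have "card (cube_roots c) = 3" by simp
    then have "c \<noteq> 0" "cube_roots c \<noteq> {}" by auto
    then show "c \<in> I" by (simp add: I_def)
  next
    fix c :: 'a assume "c \<in> I"
    then show "c \<in> {c. card (cube_roots c) = 3}"
      using card_cube_roots_nonzero[of c] three_roots by (simp add: I_def)
  qed
  then show "card {c::'a. card (cube_roots c) = 3} = (card (UNIV :: 'a set) - 1) div 3"
    using fibres by simp
  have "{c::'a. cube_roots c = {}} = (UNIV - {0}) - I"
    unfolding I_def by auto
  moreover have "card ((UNIV - {0::'a}) - I) = card (UNIV :: 'a set) - 1 - card I"
    by (subst card_Diff_subset) (auto simp: I_def card_Diff_singleton)
  ultimately show "card {c::'a. cube_roots c = {}} = 2 * (card (UNIV :: 'a set) - 1) div 3"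
    using fibres by simp
  have "card (cube_roots c) \<noteq> 1" if "c \<noteq> 0" for c :: 'a
    using card_cube_roots_nonzero[OF that] three_roots by auto
  then show "{c::'a. c \<noteq> 0 \<and> card (cube_roots c) = 1} = {}" by blast
qed

section \<open>Planes through the axis\<close>

definition axis_plane :: "'a::field \<Rightarrow> 'a v4 set set" where
  "axis_plane a = plane (a, 0, 0, 1)"

lemma osc_inf_in_osc_planes: "osc_inf \<in> osc_planes"
  by (simp add: osc_planes_def)

lemma axis_subset_axis_plane: "axis \<subseteq> axis_plane (a::'a::field)"
proof
  fix P :: "'a v4 set" assume "P \<in> axis"
  then consider "P = axis_pt_inf" | y where "P = axis_pt y" unfolding axis_eq by blast
  then show "P \<in> axis_plane a"
    by cases (simp_all add: axis_pt_def axis_pt_inf_def axis_plane_def pt_tuple_in_plane_iff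
        tuple_eq_zero4_iff)
qed

lemma axis_plane_in_planes: "axis_plane a \<in> planes"
  unfolding axis_plane_def planes_def by (force simp: tuple_eq_zero4_iff)

lemma planes_containing_axis:
  "{H \<in> planes. axis \<subseteq> H} = insert osc_inf (range (axis_plane :: 'a::field \<Rightarrow> _))"
proof (intro equalityI subsetI)
  fix H :: "'a v4 set set" assume H: "H \<in> {H \<in> planes. axis \<subseteq> H}"
  then obtain u where "H = plane u" "u \<noteq> zero4" unfolding planes_def by blast
  moreover obtain u0 u1 u2 u3 where "u = (u0, u1, u2, u3)" by (cases u rule: prod_cases4)
  ultimately have u: "H = plane (u0, u1, u2, u3)" "(u0, u1, u2, u3) \<noteq> zero4" by simp_all
  have "axis_pt_inf \<in> H" "axis_pt 0 \<in> H"
    using H axis_pt_inf_in_axis axis_pt_in_axis by blast+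
  then have "u2 = 0" "u1 = 0"
    using u by (simp_all add: axis_pt_def axis_pt_inf_def pt_tuple_in_plane_iff tuple_eq_zero4_iff)
  show "H \<in> insert osc_inf (range axis_plane)"
  proof (cases "u3 = 0")
    case True
    with u \<open>u1 = 0\<close> \<open>u2 = 0\<close> have "u0 \<noteq> 0" "H = plane (sc u0 (1, 0, 0, 0))"
      by (simp_all add: sc_tuple tuple_eq_zero4_iff)
    then have "H = osc_inf" by (simp add: plane_sc osc_inf_def)
    then show ?thesis by simp
  next
    case False
    with u \<open>u1 = 0\<close> \<open>u2 = 0\<close> have "H = plane (sc u3 (u0 / u3, 0, 0, 1))"
      by (simp add: sc_tuple)
    then have "H = axis_plane (u0 / u3)" using False by (simp add: plane_sc axis_plane_def)
    then show ?thesis by simp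
  qed
next
  fix H :: "'a v4 set set" assume "H \<in> insert osc_inf (range axis_plane)"
  moreover have "osc_inf \<in> planes"
    using osc_planes_subset_planes osc_inf_in_osc_planes by blast
  moreover have "axis \<subseteq> osc_inf"
    by (simp add: axis_def)
  ultimately show "H \<in> {H \<in> planes. axis \<subseteq> H}"
    using axis_subset_axis_plane axis_plane_in_planes by blast
qed

lemma Pinf_notin_axis_plane: "Pinf \<notin> axis_plane (a::'a::field)"
  by (simp add: Pinf_def axis_plane_def pt_tuple_in_plane_iff tuple_eq_zero4_iff)

lemma osc_inf_neq_axis_plane: "osc_inf \<noteq> axis_plane a"
  using Pinf_in_osc_inf Pinf_notin_axis_plane by metis

lemma axis_plane_Int_curve: "axis_plane a \<inter> curve = Pc ` cube_roots (- (a::'a::field))"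
proof -
  have "Pc t \<in> axis_plane a \<longleftrightarrow> t \<in> cube_roots (- a)" for t
    by (auto simp: Pc_def axis_plane_def cube_roots_def pt_tuple_in_plane_iff tuple_eq_zero4_iff
        eq_neg_iff_add_eq_0 add.commute)
  then show ?thesis
    unfolding curve_def using Pinf_notin_axis_plane by auto
qed

lemma card_axis_plane_Int_curve: "card (axis_plane a \<inter> curve) = card (cube_roots (- (a::'a::field)))"
proof -
  have "inj (Pc :: 'a \<Rightarrow> _)"
    by (rule injI) (simp add: Pc_def pt_tuple_eq_iff)
  then show ?thesis
    unfolding axis_plane_Int_curve by (simp add: card_image inj_on_subset)
qed

lemma osc_inf_Int_curve: "osc_inf \<inter> curve = {Pinf}"
proof -
  have "Pc t \<notin> osc_inf" for t :: 'a
    by (simp add: Pc_def osc_inf_def pt_tuple_in_plane_iff tuple_eq_zero4_iff)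
  then show ?thesis
    unfolding curve_def using Pinf_in_osc_inf by auto
qed

lemma axis_plane_in_osc_planes_iff:
  assumes three: "(3::'a::field) \<noteq> 0"
  shows "axis_plane a \<in> osc_planes \<longleftrightarrow> a = (0::'a)"
proof
  assume "axis_plane a \<in> osc_planes"
  then obtain t where t: "axis_plane a = osc t"
    unfolding osc_planes_def using osc_inf_neq_axis_plane by blast
  \<comment> \<open>\<open>axis_pt 0\<close> lies on no osculating plane other than \<open>\<Pi>(0)\<close> and \<open>\<Pi>(\<infinity>)\<close>.\<close>
  have "axis_pt 0 \<in> osc t"
    using t axis_subset_axis_plane axis_pt_in_axis by blast
  then have "t = 0"
    using three by (simp add: axis_pt_def osc_def pt_tuple_in_plane_iff tuple_eq_zero4_iff)
  then have "Pc 0 \<in> axis_plane a"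
    using t by (simp add: Pc_in_osc_iff)
  then show "a = 0"
    by (simp add: Pc_def axis_plane_def pt_tuple_in_plane_iff tuple_eq_zero4_iff)
next
  assume "a = 0"
  then have "axis_plane a = osc 0" by (simp add: axis_plane_def osc_def)
  then show "axis_plane a \<in> osc_planes" by (simp add: osc_planes_def)
qed

lemma card_Collect_uminus: "card {a::'a::ab_group_add. P (- a)} = card {c. P c}"
proof -
  have "{a. P (- a)} = uminus ` {c. P c}"
    by (auto simp: image_iff) (metis minus_minus)
  then show ?thesis by (simp add: card_image)
qed

lemma card_cube_roots_neq_2:
  assumes "(3::'a::field) \<noteq> 0"
  shows "card (cube_roots (c::'a)) \<noteq> 2"
  using card_cube_roots_nonzero[of c] card_cube_roots_1[OF assms] by (cases "c = 0") auto

lemma OD2_axis: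
  assumes three: "(3::'a::{field,finite}) \<noteq> 0"
  shows "OD2 (axis :: 'a v4 set set)
           = [2, 0, card {c::'a. card (cube_roots c) = 3},
              card {c::'a. c \<noteq> 0 \<and> card (cube_roots c) = 1}, card {c::'a. cube_roots c = {}}]"
proof -
  let ?S = "insert osc_inf (range (axis_plane :: 'a \<Rightarrow> _))"
  have through: "{H \<in> D. axis \<subseteq> H} = D \<inter> ?S" if "D \<in> {HC1, HC2, HC3, HC4, HC5}" for D
  proof -
    have "D \<subseteq> planes"
      using that osc_planes_subset_planes by (auto simp: HC1_def HC2_def HC3_def HC4_def HC5_def)
    then show ?thesis using planes_containing_axis by blast
  qed
  have "HC1 \<inter> ?S = {osc_inf, axis_plane 0}"
    using axis_plane_in_osc_planes_iff[OF three] osc_inf_neq_axis_plane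
    unfolding HC1_def osc_planes_def by auto
  moreover have "HC2 \<inter> ?S = {}"
    unfolding HC2_def
    by (auto simp: osc_inf_Int_curve card_axis_plane_Int_curve card_cube_roots_neq_2[OF three])
  moreover have "HC3 \<inter> ?S = axis_plane ` {a. card (cube_roots (- a)) = 3}"
    unfolding HC3_def
    by (auto simp: osc_inf_Int_curve card_axis_plane_Int_curve axis_plane_in_planes)
  moreover have "HC4 \<inter> ?S = axis_plane ` {a. a \<noteq> 0 \<and> card (cube_roots (- a)) = 1}"
    unfolding HC4_def
    by (auto simp: card_axis_plane_Int_curve axis_plane_in_planes axis_plane_in_osc_planes_iff[OF three]
        osc_inf_in_osc_planes)
  moreover have "HC5 \<inter> ?S = axis_plane ` {a. cube_roots (- a) = {}}"
  proof -
    have "axis_plane a \<inter> curve = {} \<longleftrightarrow> cube_roots (- a) = {}" for a :: 'a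
      by (simp add: axis_plane_Int_curve)
    then show ?thesis
      unfolding HC5_def by (auto simp: osc_inf_Int_curve axis_plane_in_planes)
  qed
  moreover have "inj (axis_plane :: 'a \<Rightarrow> _)"
  proof (rule injI)
    fix a b :: 'a assume "axis_plane a = axis_plane b"
    moreover have "pt (1, 0, 0, - a) \<in> axis_plane a"
      by (simp add: axis_plane_def pt_tuple_in_plane_iff tuple_eq_zero4_iff)
    ultimately show "a = b"
      by (simp add: axis_plane_def pt_tuple_in_plane_iff tuple_eq_zero4_iff)
  qed
  ultimately show ?thesis
    unfolding OD2_def
    using card_Collect_uminus[of "\<lambda>c. card (cube_roots c) = 3"]
      card_Collect_uminus[of "\<lambda>c. c \<noteq> 0 \<and> card (cube_roots c) = 1"]
      card_Collect_uminus[of "\<lambda>c. cube_roots c = {}"]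
    by (simp add: through card_image inj_on_subset osc_inf_neq_axis_plane)
qed

lemma OD2_axis_mod_6_eq_5:
  assumes three: "(3::'a::{field,finite}) \<noteq> 0" and q: "card (UNIV :: 'a set) mod 6 = 5"
  shows "OD2 (axis :: 'a v4 set set) = [2, 0, 0, card (UNIV :: 'a set) - 1, 0]"
proof -
  have "\<not> 3 dvd card (UNIV :: 'a set) - 1" using q by presburger
  then have one: "card (cube_roots c) = 1" for c :: 'a
    by (rule card_cube_roots_if_not_dvd[OF three])
  then have "cube_roots c \<noteq> {}" for c :: 'a
    by (metis card.empty zero_neq_one)
  with one have "{c::'a. card (cube_roots c) = 3} = {}" "{c::'a. cube_roots c = {}} = {}"
    and "{c::'a. c \<noteq> 0 \<and> card (cube_roots c) = 1} = UNIV - {0}"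
    by auto
  then show ?thesis
    by (simp add: OD2_axis[OF three] card_Diff_singleton)
qed

lemma OD2_axis_mod_6_eq_1:
  assumes three: "(3::'a::{field,finite}) \<noteq> 0" and q: "card (UNIV :: 'a set) mod 6 = 1"
  shows "OD2 (axis :: 'a v4 set set)
           = [2, 0, (card (UNIV :: 'a set) - 1) div 3, 0, 2 * (card (UNIV :: 'a set) - 1) div 3]"
proof -
  have "3 dvd card (UNIV :: 'a set) - 1" using q by presburger
  then show ?thesis
    using cube_root_counts_if_dvd[OF three] by (simp add: OD2_axis[OF three])
qed

theorem mainTheorem1:
  fixes q :: nat
  assumes "q = card (UNIV :: 'a set)"
    and "(2::'a::{field,finite}) \<noteq> 0" and "(3::'a) \<noteq> 0"
  shows "(\<forall>l \<in> (L1 :: 'a v4 set set set). l \<inter> curve = {})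
    \<and> (\<exists>l0. (L1 :: 'a v4 set set set) = {line_act g l0 | g. g \<in> Gmaps})
    \<and> (\<forall>l \<in> (L1 :: 'a v4 set set set).
         (q mod 6 = 5 \<longrightarrow> OD2 l = [2, 0, 0, q - 1, 0] \<and> OD0 l = [0, 2, q - 1, 0, 0])
       \<and> (q mod 6 = 1 \<longrightarrow> OD2 l = [2, 0, (q - 1) div 3, 0, 2 * (q - 1) div 3]
                              \<and> OD0 l = [0, 2, q - 1, 0, 0]))"
proof -
  note q = assms(1) and three = assms(3)
  have "l \<inter> curve = {} \<and> OD0 l = [0, 2, q - 1, 0, 0]
        \<and> (q mod 6 = 5 \<longrightarrow> OD2 l = [2, 0, 0, q - 1, 0])
        \<and> (q mod 6 = 1 \<longrightarrow> OD2 l = [2, 0, (q - 1) div 3, 0, 2 * (q - 1) div 3])"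
    if l: "l \<in> L1" for l :: "'a v4 set set"
  proof -
    obtain g where g: "g \<in> Gmaps" "l = line_act g axis"
      using L1_in_Gmaps_orbit_axis[OF l] by blast
    then have "l \<inter> curve = {}"
      using Gmaps_line_act_Int_curve[OF g(1) axis_subset_points] axis_Int_curve
      by (simp add: line_act_def)
    moreover have "OD0 l = OD0 (axis :: 'a v4 set set)" "OD2 l = OD2 (axis :: 'a v4 set set)"
      using g OD0_Gmaps_line_act[OF three] OD2_Gmaps_line_act axis_subset_points by simp_all
    ultimately show ?thesis
      using OD0_axis[OF three] OD2_axis_mod_6_eq_5[OF three] OD2_axis_mod_6_eq_1[OF three]
      unfolding q by simp
  qed
  moreover have "\<exists>l0. (L1 :: 'a v4 set set set) = {line_act g l0 | g. g \<in> Gmaps}"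
    using L1_eq_Gmaps_orbit_axis by blast
  ultimately show ?thesis by simp
qed

end
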